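(* Let $x\in\{0,1\}^\infty$ have randomness rate $\tau$ for some constant $\tau>0$, and let $0<\sigma<\tau$. Then for every sufficiently large $n_0$ there is $n_1>n_0$ such that \[K(x(n_0+1:n_1)\mid x(1:n_0))>\sigma(n_1-n_0).\] Furthermore, there is an effective procedure that on input $n_0,\tau,\sigma$ computes such an $n_1$.
   Context: $x(n_1:n_2)$ denotes the substring of bits $n_1$ through $n_2$ of $x$ (bits indexed from 1). $K(u)$ is plain Kolmogorov complexity with respect to a fixed universal machine, and $K(u\mid v)=\min\{|p|: U(p,v)=u\}$ is conditional plain Kolmogorov complexity with respect to a fixed universal conditional machine $U$. A sequence $x$ has randomness rate $\sigma$ if $K(x(1:n))\ge\sigma n$ for all but finitely many $n$. *)

theory Defs
  imports Complex_Main
begin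

datatype recf = Z | S | Id nat | Cn recf "recf list" | Pr recf recf | Mn recf

inductive eval :: "recf \<Rightarrow> nat list \<Rightarrow> nat \<Rightarrow> bool" where
  eval_Z: "eval Z xs 0"
| eval_S: "eval S (x # xs) (Suc x)"
| eval_Id: "i < length xs \<Longrightarrow> eval (Id i) xs (xs ! i)"
| eval_Cn: "length ys = length gs \<Longrightarrow> (\<forall>i<length gs. eval (gs ! i) xs (ys ! i))
             \<Longrightarrow> eval f ys z \<Longrightarrow> eval (Cn f gs) xs z"
| eval_Pr0: "eval f xs y \<Longrightarrow> eval (Pr f g) (0 # xs) y"
| eval_PrS: "eval (Pr f g) (n # xs) y \<Longrightarrow> eval g (n # y # xs) z
             \<Longrightarrow> eval (Pr f g) (Suc n # xs) z"
| eval_Mn: "eval f (n # xs) 0 \<Longrightarrow> (\<forall>m<n. \<exists>k. eval f (m # xs) (Suc k))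
             \<Longrightarrow> eval (Mn f) xs n"

text \<open>Bijective encoding of binary strings (bool lists) as natural numbers.\<close>
fun enc :: "bool list \<Rightarrow> nat" where
  "enc [] = 0"
| "enc (b # bs) = (if b then 2 else 1) + 2 * enc bs"

definition computable1 :: "(bool list \<Rightarrow> bool list option) \<Rightarrow> bool" where
  "computable1 M \<longleftrightarrow> (\<exists>f. \<forall>p y. eval f [enc p] y \<longleftrightarrow> (\<exists>u. M p = Some u \<and> y = enc u))"

definition computable2 :: "(bool list \<Rightarrow> bool list \<Rightarrow> bool list option) \<Rightarrow> bool" where
  "computable2 M \<longleftrightarrow>
     (\<exists>f. \<forall>p v y. eval f [enc p, enc v] y \<longleftrightarrow> (\<exists>u. M p v = Some u \<and> y = enc u))"

definition universal1 :: "(bool list \<Rightarrow> bool list option) \<Rightarrow> bool" where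
  "universal1 U \<longleftrightarrow> computable1 U \<and>
     (\<forall>M. computable1 M \<longrightarrow> (\<exists>c. \<forall>p u. M p = Some u \<longrightarrow>
        (\<exists>q. U q = Some u \<and> length q \<le> length p + c)))"

definition universal2 :: "(bool list \<Rightarrow> bool list \<Rightarrow> bool list option) \<Rightarrow> bool" where
  "universal2 U \<longleftrightarrow> computable2 U \<and>
     (\<forall>M. computable2 M \<longrightarrow> (\<exists>c. \<forall>p v u. M p v = Some u \<longrightarrow>
        (\<exists>q. U q v = Some u \<and> length q \<le> length p + c)))"

definition KC :: "(bool list \<Rightarrow> bool list option) \<Rightarrow> bool list \<Rightarrow> nat" where
  "KC U u = (LEAST n. \<exists>p. length p = n \<and> U p = Some u)"

definition KCond :: "(bool list \<Rightarrow> bool list \<Rightarrow> bool list option) \<Rightarrow> bool list \<Rightarrow> bool list \<Rightarrow> nat" where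
  "KCond U u v = (LEAST n. \<exists>p. length p = n \<and> U p v = Some u)"

text \<open>Infinite binary sequences are x :: nat => bool, where bit number k
  (bits indexed from 1) is x (k - 1).  seg x n1 n2 is x(n1:n2).\<close>
definition seg :: "(nat \<Rightarrow> bool) \<Rightarrow> nat \<Rightarrow> nat \<Rightarrow> bool list" where
  "seg x n1 n2 = map (\<lambda>k. x (k - 1)) [n1..<Suc n2]"

definition has_rate :: "(bool list \<Rightarrow> bool list option) \<Rightarrow> (nat \<Rightarrow> bool) \<Rightarrow> real \<Rightarrow> bool" where
  "has_rate U x \<sigma> \<longleftrightarrow> (\<forall>\<^sub>F n in sequentially. real (KC U (seg x 1 n)) \<ge> \<sigma> * real n)"

end

theory Submission
  imports Defs
begin

text \<open>A machine can read a self-delimiting code \<open>1\<^sup>|\<^sup>v\<^sup>| 0 v q\<close>, run the conditional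
  universal machine on \<open>q\<close> with condition \<open>v\<close> and print \<open>v\<close> followed by the result; by
  universality \<open>K(v w) \<le> 2|v| + K(w | v) + c\<close>. With \<open>v = x(1:n\<^sub>0)\<close> and
  \<open>w = x(n\<^sub>0+1 : k n\<^sub>0)\<close> the randomness rate gives \<open>K(v w) \<ge> \<tau> k n\<^sub>0\<close>, hence
  \<open>K(w | v) \<ge> (\<tau> k - 2) n\<^sub>0 - c\<close>, which exceeds \<open>\<sigma> (k - 1) n\<^sub>0\<close> for large \<open>n\<^sub>0\<close> as soon as
  \<open>(\<tau> - \<sigma>) k \<ge> 2\<close>. For \<open>\<tau> = a/b\<close> and \<open>\<sigma> = c/d\<close> the integer \<open>k = 2bd + 1\<close> works, so
  \<open>n\<^sub>1 = k n\<^sub>0\<close> is computed by a primitive recursive program.\<close>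

section \<open>Mu-recursive programs computing total functions\<close>

lemma eval_Z_iff [simp]: "eval Z xs y \<longleftrightarrow> y = 0"
  by (auto elim: eval.cases intro: eval.intros)

lemma eval_S_iff: "eval S xs y \<longleftrightarrow> (\<exists>a ys. xs = a # ys \<and> y = Suc a)"
  by (auto elim: eval.cases intro: eval.intros)

lemma eval_Id_iff [simp]: "eval (Id i) xs y \<longleftrightarrow> i < length xs \<and> y = xs ! i"
  by (auto elim: eval.cases intro: eval.intros)

lemma eval_Cn_iff:
  "eval (Cn f gs) xs z \<longleftrightarrow>
     (\<exists>ys. length ys = length gs \<and> (\<forall>i<length gs. eval (gs ! i) xs (ys ! i)) \<and> eval f ys z)"
  by (auto elim: eval.cases intro: eval.intros)

lemma eval_Pr0_iff: "eval (Pr f g) (0 # xs) y \<longleftrightarrow> eval f xs y"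
  by (auto elim: eval.cases intro: eval.intros)

lemma eval_PrS_iff:
  "eval (Pr f g) (Suc n # xs) z \<longleftrightarrow> (\<exists>y. eval (Pr f g) (n # xs) y \<and> eval g (n # y # xs) z)"
  by (auto elim: eval.cases intro: eval.intros)

lemma eval_Mn_iff:
  "eval (Mn f) xs n \<longleftrightarrow> eval f (n # xs) 0 \<and> (\<forall>m<n. \<exists>k. eval f (m # xs) (Suc k))"
  by (auto elim: eval.cases intro: eval.intros)

lemma eval_Cn1_iff: "eval (Cn f [g]) xs z \<longleftrightarrow> (\<exists>a. eval g xs a \<and> eval f [a] z)"
  unfolding eval_Cn_iff by (auto simp: length_Suc_conv)

lemma eval_Cn2_iff:
  "eval (Cn f [g1, g2]) xs z \<longleftrightarrow> (\<exists>a b. eval g1 xs a \<and> eval g2 xs b \<and> eval f [a, b] z)"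
  unfolding eval_Cn_iff
proof safe
  fix ys
  assume "length ys = length [g1, g2]" "\<forall>i<length [g1, g2]. eval ([g1, g2] ! i) xs (ys ! i)"
    and "eval f ys z"
  then show "\<exists>a b. eval g1 xs a \<and> eval g2 xs b \<and> eval f [a, b] z"
    by (auto simp: length_Suc_conv less_Suc_eq) blast
qed (auto intro!: exI[of _ "[a, b]" for a b] simp: less_Suc_eq)

definition computes :: "nat \<Rightarrow> recf \<Rightarrow> (nat list \<Rightarrow> nat) \<Rightarrow> bool" where
  "computes k f h \<longleftrightarrow> (\<forall>xs y. length xs = k \<longrightarrow> (eval f xs y \<longleftrightarrow> y = h xs))"

lemma computesD: "computes k f h \<Longrightarrow> length xs = k \<Longrightarrow> eval f xs y \<longleftrightarrow> y = h xs"
  by (simp add: computes_def)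

lemma computes_Z: "computes k Z (\<lambda>_. 0)"
  by (simp add: computes_def)

lemma computes_S: "computes 1 S (\<lambda>xs. Suc (xs ! 0))"
  by (auto simp: computes_def eval_S_iff length_Suc_conv)

lemma computes_Id: "i < k \<Longrightarrow> computes k (Id i) (\<lambda>xs. xs ! i)"
  by (simp add: computes_def)

lemma computes_cong:
  assumes "computes k f h" "\<And>xs. length xs = k \<Longrightarrow> h xs = H xs"
  shows "computes k f H"
  using assms by (simp add: computes_def)

lemma computes_Cn1:
  assumes "computes 1 f h" "computes k g h1"
  shows "computes k (Cn f [g]) (\<lambda>xs. h [h1 xs])"
  using assms by (simp add: computes_def eval_Cn1_iff)

lemma computes_Cn2:
  assumes "computes 2 f h" "computes k g1 h1" "computes k g2 h2"
  shows "computes k (Cn f [g1, g2]) (\<lambda>xs. h [h1 xs, h2 xs])"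
  using assms by (simp add: computes_def eval_Cn2_iff)

text \<open>The arities \<open>k1\<close>, \<open>k2\<close> are separate variables so that the rule applies to goals with
  numeral arities.\<close>

lemma computes_Pr:
  assumes "computes k f h" "computes k2 g h'" "k1 = Suc k" "k2 = Suc k1"
    and "\<And>ys. length ys = k \<Longrightarrow> H (0 # ys) = h ys"
    and "\<And>n ys. length ys = k \<Longrightarrow> H (Suc n # ys) = h' (n # H (n # ys) # ys)"
  shows "computes k1 (Pr f g) H"
  unfolding computes_def
proof (intro allI impI)
  fix xs :: "nat list" and y
  assume "length xs = k1"
  then obtain n ys where xs: "xs = n # ys" and ys: "length ys = k"
    using assms(3) by (auto simp: length_Suc_conv)
  have "eval (Pr f g) (n # ys) y \<longleftrightarrow> y = H (n # ys)" for y
  proof (induction n arbitrary: y)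
    case 0
    then show ?case using assms ys by (simp add: eval_Pr0_iff computes_def)
  next
    case (Suc n)
    then show ?case using assms ys by (simp add: eval_PrS_iff computes_def)
  qed
  then show "eval (Pr f g) xs y \<longleftrightarrow> y = H xs" by (simp add: xs)
qed

lemma computes_Mn:
  assumes "computes k1 f h" "k1 = Suc k" "\<And>xs. length xs = k \<Longrightarrow> \<exists>i. h (i # xs) = 0"
    and "\<And>xs. length xs = k \<Longrightarrow> H xs = (LEAST i. h (i # xs) = 0)"
  shows "computes k (Mn f) H"
  unfolding computes_def
proof (intro allI impI)
  fix xs :: "nat list" and y
  assume xs: "length xs = k"
  have "eval (Mn f) xs y \<longleftrightarrow> h (y # xs) = 0 \<and> (\<forall>m<y. h (m # xs) \<noteq> 0)"
    using assms(1,2) xs by (auto simp: eval_Mn_iff computes_def) (metis gr0_implies_Suc)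
  also have "\<dots> \<longleftrightarrow> y = (LEAST i. h (i # xs) = 0)"
    using assms(3)[OF xs]
    by (metis (mono_tags, lifting) LeastI Least_equality not_less not_less_Least)
  finally show "eval (Mn f) xs y \<longleftrightarrow> y = H xs" using assms(4)[OF xs] by simp
qed

definition r_one :: recf where
  "r_one = Cn S [Z]"
definition r_pred :: recf where
  "r_pred = Pr Z (Id 0)"
definition r_add :: recf where
  "r_add = Pr (Id 0) (Cn S [Id 1])"
definition r_mult :: recf where
  "r_mult = Pr Z (Cn r_add [Id 1, Id 2])"
definition r_monus :: recf where
  "r_monus = Pr (Id 0) (Cn r_pred [Id 1])"
definition r_mod2 :: recf where
  "r_mod2 = Pr Z (Cn r_monus [Id 1, r_one])"
definition r_div2 :: recf where
  "r_div2 = Pr Z (Cn r_add [Id 1, Cn r_mod2 [Id 0]])"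
definition r_pow2 :: recf where
  "r_pow2 = Pr r_one (Cn r_add [Id 1, Id 1])"

lemma computes_r_one: "computes k r_one (\<lambda>_. 1)"
  unfolding r_one_def by (rule computes_cong[OF computes_Cn1[OF computes_S computes_Z]]) simp

lemma computes_r_pred: "computes 1 r_pred (\<lambda>xs. xs ! 0 - 1)"
  unfolding r_pred_def by (rule computes_Pr[OF computes_Z computes_Id]) auto

lemma computes_r_add: "computes 2 r_add (\<lambda>xs. xs ! 0 + xs ! 1)"
  unfolding r_add_def
  by (rule computes_Pr[OF computes_Id computes_Cn1[OF computes_S computes_Id]]) auto

lemma computes_r_mult: "computes 2 r_mult (\<lambda>xs. xs ! 0 * xs ! 1)"
  unfolding r_mult_def
  by (rule computes_Pr[OF computes_Z computes_Cn2[OF computes_r_add computes_Id computes_Id]]) auto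

lemma computes_r_monus: "computes 2 r_monus (\<lambda>xs. xs ! 1 - xs ! 0)"
  unfolding r_monus_def
  by (rule computes_Pr[OF computes_Id computes_Cn1[OF computes_r_pred computes_Id]]) auto

lemma computes_r_mod2: "computes 1 r_mod2 (\<lambda>xs. xs ! 0 mod 2)"
  unfolding r_mod2_def
  by (rule computes_Pr[OF computes_Z computes_Cn2[OF computes_r_monus computes_Id computes_r_one]])
    (auto simp: mod_Suc)

lemma computes_r_div2: "computes 1 r_div2 (\<lambda>xs. xs ! 0 div 2)"
  unfolding r_div2_def
  by (rule computes_Pr[OF computes_Z computes_Cn2[OF computes_r_add computes_Id
        computes_Cn1[OF computes_r_mod2 computes_Id]]]) (auto, presburger)

lemma computes_r_pow2: "computes 1 r_pow2 (\<lambda>xs. 2 ^ (xs ! 0))"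
  unfolding r_pow2_def
  by (rule computes_Pr[OF computes_r_one
        computes_Cn2[OF computes_r_add computes_Id computes_Id]]) auto

section \<open>Decoding self-delimiting pairs\<close>

lemma enc_append: "enc (xs @ ys) = enc xs + 2 ^ length xs * enc ys"
  by (induction xs) auto

lemma inj_enc: "inj enc"
proof (rule injI)
  fix xs ys :: "bool list"
  show "enc xs = enc ys \<Longrightarrow> xs = ys"
  proof (induction xs arbitrary: ys)
    case Nil
    then show ?case by (cases ys) (auto split: if_splits)
  next
    case (Cons a xs)
    then show ?case by (cases ys) (auto split: if_splits, presburger+)
  qed
qed

lemma surj_enc: "surj enc"
proof -
  have "\<exists>xs. enc xs = n" for n
  proof (induction n rule: less_induct)
    case (less n)
    have "n = 0 \<or> (\<exists>k. n = 1 + 2 * k) \<or> (\<exists>k. n = 2 + 2 * k)" by presburger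
    then consider "n = 0" | k where "n = 1 + 2 * k" | k where "n = 2 + 2 * k" by blast
    then show ?case
    proof cases
      case 1
      then show ?thesis by (intro exI[of _ "[]"]) simp
    next
      case 2
      with less obtain xs where "enc xs = k" by fastforce
      with 2 show ?thesis by (intro exI[of _ "False # xs"]) simp
    next
      case 3
      with less obtain xs where "enc xs = k" by fastforce
      with 3 show ?thesis by (intro exI[of _ "True # xs"]) simp
    qed
  qed
  then show ?thesis by (metis surjI)
qed

definition dec :: "nat \<Rightarrow> bool list" where
  "dec = inv enc"

lemma enc_dec [simp]: "enc (dec n) = n"
  unfolding dec_def by (simp add: surj_enc surj_f_inv_f)

lemma dec_enc [simp]: "dec (enc xs) = xs"
  unfolding dec_def by (simp add: inj_enc)

text \<open>The decoder mirrors \<open>tl\<close>, \<open>drop\<close> and \<open>takeWhile\<close> arithmetically on \<open>enc\<close>-codes, so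
  that it is computed by mu-recursive programs.\<close>

definition enc_tl :: "nat \<Rightarrow> nat" where
  "enc_tl n = (n - 1) div 2"

lemma enc_tl_enc: "enc_tl (enc xs) = enc (tl xs)"
  by (cases xs) (auto simp: enc_tl_def)

lemma funpow_enc_tl_enc: "(enc_tl ^^ i) (enc xs) = enc (drop i xs)"
  by (induction i) (auto simp: enc_tl_enc drop_Suc tl_drop)

definition starts_True_code :: "nat \<Rightarrow> nat" where
  "starts_True_code n = (1 - n mod 2) * n"

lemma starts_True_code_enc_eq_0: "starts_True_code (enc xs) = 0 \<longleftrightarrow> xs = [] \<or> \<not> hd xs"
  by (cases xs) (auto simp: starts_True_code_def)

definition code_len :: "nat \<Rightarrow> nat" where
  "code_len n = (LEAST i. starts_True_code ((enc_tl ^^ i) n) = 0)"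

lemma code_len_enc: "code_len (enc xs) = length (takeWhile id xs)"
  unfolding code_len_def funpow_enc_tl_enc starts_True_code_enc_eq_0
proof (rule Least_equality)
  show "drop (length (takeWhile id xs)) xs = [] \<or> \<not> hd (drop (length (takeWhile id xs)) xs)"
    using hd_dropWhile[of id xs] by (auto simp: dropWhile_eq_drop)
next
  fix i
  assume "drop i xs = [] \<or> \<not> hd (drop i xs)"
  show "length (takeWhile id xs) \<le> i"
  proof (rule ccontr)
    assume "\<not> length (takeWhile id xs) \<le> i"
    then have i: "i < length (takeWhile id xs)" by simp
    then have "i < length xs" using length_takeWhile_le less_le_trans by blast
    moreover have "xs ! i"
      using i by (metis id_apply nth_mem set_takeWhileD takeWhile_nth)
    ultimately show False
      using \<open>drop i xs = [] \<or> \<not> hd (drop i xs)\<close> by (simp add: hd_drop_conv_nth)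
  qed
qed

definition code_body :: "nat \<Rightarrow> nat" where
  "code_body n = (enc_tl ^^ Suc (code_len n)) n"

definition code_snd :: "nat \<Rightarrow> nat" where
  "code_snd n = (enc_tl ^^ code_len n) (code_body n)"

definition code_fst :: "nat \<Rightarrow> nat" where
  "code_fst n = code_body n - 2 ^ code_len n * code_snd n"

definition pair_code :: "bool list \<Rightarrow> bool list \<Rightarrow> bool list" where
  "pair_code v q = replicate (length v) True @ False # v @ q"

lemma length_pair_code: "length (pair_code v q) = 2 * length v + 1 + length q"
  by (simp add: pair_code_def)

lemma code_len_pair_code: "code_len (enc (pair_code v q)) = length v"
  by (simp add: code_len_enc pair_code_def takeWhile_append)

lemma code_snd_pair_code: "code_snd (enc (pair_code v q)) = enc q"
  and code_fst_pair_code: "code_fst (enc (pair_code v q)) = enc v"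
proof -
  have body: "code_body (enc (pair_code v q)) = enc (v @ q)"
    unfolding code_body_def code_len_pair_code
    by (simp add: funpow_enc_tl_enc pair_code_def enc_tl_def)
  then show snd: "code_snd (enc (pair_code v q)) = enc q"
    by (simp add: code_snd_def code_len_pair_code funpow_enc_tl_enc)
  show "code_fst (enc (pair_code v q)) = enc v"
    by (simp add: code_fst_def body snd code_len_pair_code enc_append)
qed

definition r_enc_tl :: recf where
  "r_enc_tl = Cn r_div2 [r_pred]"
definition r_iter_enc_tl :: recf where
  "r_iter_enc_tl = Pr (Id 0) (Cn r_enc_tl [Id 1])"
definition r_starts_True :: recf where
  "r_starts_True = Cn r_mult [Cn r_monus [r_mod2, r_one], Id 0]"
definition r_code_len :: recf where
  "r_code_len = Mn (Cn r_starts_True [r_iter_enc_tl])"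
definition r_code_body :: recf where
  "r_code_body = Cn r_iter_enc_tl [Cn S [r_code_len], Id 0]"
definition r_code_snd :: recf where
  "r_code_snd = Cn r_iter_enc_tl [r_code_len, r_code_body]"
definition r_code_fst :: recf where
  "r_code_fst = Cn r_monus [Cn r_mult [Cn r_pow2 [r_code_len], r_code_snd], r_code_body]"

lemma computes_r_enc_tl: "computes 1 r_enc_tl (\<lambda>xs. enc_tl (xs ! 0))"
  unfolding r_enc_tl_def
  by (rule computes_cong[OF computes_Cn1[OF computes_r_div2 computes_r_pred]])
    (auto simp: enc_tl_def)

lemma computes_r_iter_enc_tl: "computes 2 r_iter_enc_tl (\<lambda>xs. (enc_tl ^^ (xs ! 0)) (xs ! 1))"
  unfolding r_iter_enc_tl_def
  by (rule computes_Pr[OF computes_Id computes_Cn1[OF computes_r_enc_tl computes_Id]]) auto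

lemma computes_r_starts_True: "computes 1 r_starts_True (\<lambda>xs. starts_True_code (xs ! 0))"
  unfolding r_starts_True_def
  by (rule computes_cong[OF computes_Cn2[OF computes_r_mult
        computes_Cn2[OF computes_r_monus computes_r_mod2 computes_r_one] computes_Id]])
    (auto simp: starts_True_code_def)

lemma code_len_exists: "\<exists>i. starts_True_code ((enc_tl ^^ i) n) = 0"
proof -
  have "(enc_tl ^^ i) n \<le> n - i" for i
    by (induction i) (auto simp: enc_tl_def)
  then have "(enc_tl ^^ n) n = 0" by (metis diff_self_eq_0 le_zero_eq)
  then show ?thesis by (auto simp: starts_True_code_def)
qed

lemma computes_r_code_len: "computes 1 r_code_len (\<lambda>xs. code_len (xs ! 0))"
  unfolding r_code_len_def
  by (rule computes_Mn[OF computes_Cn1[OF computes_r_starts_True computes_r_iter_enc_tl]])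
    (auto simp: code_len_def code_len_exists length_Suc_conv)

lemma computes_r_code_body: "computes 1 r_code_body (\<lambda>xs. code_body (xs ! 0))"
  unfolding r_code_body_def
  by (rule computes_cong[OF computes_Cn2[OF computes_r_iter_enc_tl
        computes_Cn1[OF computes_S computes_r_code_len] computes_Id]]) (auto simp: code_body_def)

lemma computes_r_code_snd: "computes 1 r_code_snd (\<lambda>xs. code_snd (xs ! 0))"
  unfolding r_code_snd_def
  by (rule computes_cong[OF computes_Cn2[OF computes_r_iter_enc_tl computes_r_code_len
        computes_r_code_body]])
    (auto simp: code_snd_def)

lemma computes_r_code_fst: "computes 1 r_code_fst (\<lambda>xs. code_fst (xs ! 0))"
  unfolding r_code_fst_def
  by (rule computes_cong[OF computes_Cn2[OF computes_r_monus computes_Cn2[OF computes_r_mult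
        computes_Cn1[OF computes_r_pow2 computes_r_code_len] computes_r_code_snd]
        computes_r_code_body]]) (auto simp: code_fst_def)

text \<open>On inputs that are not of the form \<open>pair_code v q\<close> the output is junk.\<close>

definition pair_machine ::
  "(bool list \<Rightarrow> bool list \<Rightarrow> bool list option) \<Rightarrow> bool list \<Rightarrow> bool list option" where
  "pair_machine U p =
     map_option (\<lambda>w. dec (code_fst (enc p) + 2 ^ code_len (enc p) * enc w))
       (U (dec (code_snd (enc p))) (dec (code_fst (enc p))))"

lemma pair_machine_pair_code: "pair_machine U (pair_code v q) = map_option (\<lambda>w. v @ w) (U q v)"
  by (simp add: pair_machine_def code_len_pair_code code_fst_pair_code code_snd_pair_code
      enc_append[symmetric] option.map_comp comp_def)

lemma computable1_pair_machine:
  assumes "computable2 U"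
  shows "computable1 (pair_machine U)"
proof -
  obtain g where g: "\<And>p v y. eval g [enc p, enc v] y \<longleftrightarrow> (\<exists>u. U p v = Some u \<and> y = enc u)"
    using assms unfolding computable2_def by blast
  define P where "P = Cn r_add [r_code_fst,
    Cn r_mult [Cn r_pow2 [r_code_len], Cn g [r_code_snd, r_code_fst]]]"
  note total = computesD[OF computes_r_code_fst] computesD[OF computes_r_code_snd]
    computesD[OF computes_r_code_len] computesD[OF computes_r_pow2]
    computesD[OF computes_r_mult] computesD[OF computes_r_add]
  have "eval P [n] y \<longleftrightarrow>
      (\<exists>b. eval g [code_snd n, code_fst n] b \<and> y = code_fst n + 2 ^ code_len n * b)" for n y
    unfolding P_def eval_Cn1_iff eval_Cn2_iff by (auto simp: total)
  then have "eval P [enc p] y \<longleftrightarrow> (\<exists>u. pair_machine U p = Some u \<and> y = enc u)" for p y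
    using g[of "dec (code_snd (enc p))" "dec (code_fst (enc p))"]
    by (auto simp: pair_machine_def)
  then show ?thesis unfolding computable1_def by blast
qed

section \<open>Complexity of concatenations and of segments\<close>

lemma KC_le: "U p = Some u \<Longrightarrow> KC U u \<le> length p"
  unfolding KC_def by (rule Least_le) blast

lemma KCond_attained:
  assumes "universal2 U"
  shows "\<exists>p. length p = KCond U u v \<and> U p v = Some u"
proof -
  have "computable2 (\<lambda>p v. Some p)"
    unfolding computable2_def by (intro exI[of _ "Id 0"]) simp
  then obtain p where "U p v = Some u"
    using assms[unfolded universal2_def, THEN conjunct2, rule_format] by fastforce
  then have "\<exists>n p. length p = n \<and> U p v = Some u" by blast
  then show ?thesis unfolding KCond_def by (rule LeastI_ex)
qed

lemma KC_append_le_KCond: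
  assumes "universal1 U0" and "universal2 U"
  shows "\<exists>c. \<forall>v w. KC U0 (v @ w) \<le> 2 * length v + KCond U w v + c"
proof -
  have "computable1 (pair_machine U)"
    using assms(2) computable1_pair_machine unfolding universal2_def by blast
  then obtain c where c: "\<forall>p u. pair_machine U p = Some u \<longrightarrow>
      (\<exists>q. U0 q = Some u \<and> length q \<le> length p + c)"
    using assms(1) unfolding universal1_def by blast
  have "KC U0 (v @ w) \<le> 2 * length v + KCond U w v + (c + 1)" for v w
  proof -
    obtain p where p: "length p = KCond U w v" "U p v = Some w"
      using KCond_attained[OF assms(2)] by blast
    then have "pair_machine U (pair_code v p) = Some (v @ w)"
      by (simp add: pair_machine_pair_code)
    then obtain q where "U0 q = Some (v @ w)" "length q \<le> length (pair_code v p) + c"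
      using c by blast
    then show ?thesis using KC_le[of U0 q] p(1) by (simp add: length_pair_code)
  qed
  then show ?thesis by blast
qed

lemma length_seg_1: "length (seg x 1 n) = n"
  by (simp add: seg_def)

lemma seg_append: "n0 \<le> n1 \<Longrightarrow> seg x 1 n0 @ seg x (n0 + 1) n1 = seg x 1 n1"
  unfolding seg_def map_append[symmetric]
  using upt_add_eq_append[of 1 "Suc n0" "n1 - n0"] by simp

lemma KCond_seg_gt_eventually:
  assumes "universal1 U0" and "universal2 U" and "has_rate U0 x \<tau>"
    and "\<sigma> > 0" and "k \<ge> 2" and "(\<tau> - \<sigma>) * real k \<ge> 2"
  shows "\<forall>\<^sub>F n0 in sequentially. n0 < k * n0 \<and>
           \<sigma> * real (k * n0 - n0) < real (KCond U (seg x (n0 + 1) (k * n0)) (seg x 1 n0))"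
proof -
  obtain c where c: "\<forall>v w. KC U0 (v @ w) \<le> 2 * length v + KCond U w v + c"
    using KC_append_le_KCond[OF assms(1,2)] by blast
  obtain N where N: "\<And>n. n \<ge> N \<Longrightarrow> \<tau> * real n \<le> real (KC U0 (seg x 1 n))"
    using assms(3) unfolding has_rate_def eventually_sequentially by blast
  have "\<forall>\<^sub>F n0 in sequentially. n0 \<ge> max (max N 1) (nat \<lceil>real c / \<sigma>\<rceil> + 1)"
    by (rule eventually_ge_at_top)
  then show ?thesis
  proof (rule eventually_mono)
    fix n0 :: nat
    assume n0: "n0 \<ge> max (max N 1) (nat \<lceil>real c / \<sigma>\<rceil> + 1)"
    define K where "K = KCond U (seg x (n0 + 1) (k * n0)) (seg x 1 n0)"
    have "n0 < k * n0" using assms(5) n0 by simp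
    have "N \<le> k * n0" using n0 \<open>n0 < k * n0\<close> by linarith
    then have "\<tau> * real (k * n0) \<le> real (KC U0 (seg x 1 (k * n0)))" by (rule N)
    also have "\<dots> \<le> 2 * real n0 + real K + real c"
    proof -
      have "seg x 1 (k * n0) = seg x 1 n0 @ seg x (n0 + 1) (k * n0)"
        using seg_append \<open>n0 < k * n0\<close> by simp
      then have "KC U0 (seg x 1 (k * n0)) \<le> 2 * n0 + K + c"
        using c length_seg_1 unfolding K_def by metis
      then show ?thesis by linarith
    qed
    finally have upper: "\<tau> * (real k * real n0) \<le> 2 * real n0 + real K + real c" by simp
    have gap: "2 * real n0 \<le> (\<tau> - \<sigma>) * real k * real n0"
      using mult_right_mono[OF assms(6), of "real n0"] by simp
    have "real c / \<sigma> < real n0" using n0 by linarith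
    then have big: "real c < \<sigma> * real n0" using assms(4) by (simp add: pos_divide_less_eq mult.commute)
    have "\<sigma> * real (k * n0 - n0) = \<sigma> * (real k * real n0) - \<sigma> * real n0"
      using \<open>n0 < k * n0\<close> by (simp add: of_nat_diff right_diff_distrib)
    moreover have "2 * real n0 + \<sigma> * (real k * real n0) \<le> \<tau> * (real k * real n0)"
      using gap by (simp add: algebra_simps)
    ultimately have "\<sigma> * real (k * n0 - n0) < real K"
      using upper big by linarith
    with \<open>n0 < k * n0\<close> show "n0 < k * n0 \<and> \<sigma> * real (k * n0 - n0) < real K" by blast
  qed
qed

section \<open>Computing \<open>n\<^sub>1\<close>\<close>

lemma rat_gap_mult_ge_two:
  fixes a b c d :: nat
  assumes "b > 0" and "d > 0" and "real c / real d < real a / real b"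
  shows "(real a / real b - real c / real d) * real (2 * (b * d) + 1) \<ge> 2"
proof -
  have "c * b < a * d"
    using assms by (simp add: field_simps flip: of_nat_mult)
  then have "1 \<le> real a * real d - real c * real b"
    by (simp flip: of_nat_mult)
  from mult_right_mono[OF this, of "real (2 * (b * d) + 1)"]
  have "2 * (real b * real d) \<le> (real a * real d - real c * real b) * real (2 * (b * d) + 1)"
    by simp
  then show ?thesis
    using assms(1,2) by (simp add: field_simps)
qed

definition r_scale :: recf where
  "r_scale = Cn r_mult [Id 0, Cn S [Cn r_add [Cn r_mult [Id 2, Id 4], Cn r_mult [Id 2, Id 4]]]]"

lemma computes_r_scale: "computes 5 r_scale (\<lambda>xs. xs ! 0 * (2 * (xs ! 2 * xs ! 4) + 1))"
  unfolding r_scale_def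
  by (rule computes_cong[OF computes_Cn2[OF computes_r_mult computes_Id
        computes_Cn1[OF computes_S computes_Cn2[OF computes_r_add
          computes_Cn2[OF computes_r_mult computes_Id computes_Id]
          computes_Cn2[OF computes_r_mult computes_Id computes_Id]]]]]) auto

theorem lemma4p1:
  fixes U0 :: "bool list \<Rightarrow> bool list option"
    and U :: "bool list \<Rightarrow> bool list \<Rightarrow> bool list option"
  assumes "universal1 U0" and "universal2 U"
  shows "(\<forall>x \<tau> \<sigma>. \<tau> > 0 \<and> has_rate U0 x \<tau> \<and> 0 < \<sigma> \<and> \<sigma> < \<tau> \<longrightarrow>
            (\<forall>\<^sub>F n0 in sequentially. \<exists>n1>n0.
               real (KCond U (seg x (n0 + 1) n1) (seg x 1 n0)) > \<sigma> * real (n1 - n0)))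
       \<and> (\<exists>F::recf. \<forall>x a b c d.
            b > 0 \<and> d > 0 \<and> 0 < real c / real d \<and> real c / real d < real a / real b
            \<and> has_rate U0 x (real a / real b) \<longrightarrow>
            (\<forall>\<^sub>F n0 in sequentially. \<exists>n1. eval F [n0, a, b, c, d] n1 \<and> n1 > n0 \<and>
               real (KCond U (seg x (n0 + 1) n1) (seg x 1 n0)) > real c / real d * real (n1 - n0)))"
proof (intro conjI allI impI exI[of _ r_scale])
  fix x \<tau> \<sigma>
  assume h: "\<tau> > 0 \<and> has_rate U0 x \<tau> \<and> 0 < \<sigma> \<and> \<sigma> < \<tau>"
  define k where "k = nat \<lceil>2 / (\<tau> - \<sigma>)\<rceil> + 2"
  have "2 / (\<tau> - \<sigma>) \<le> real k" unfolding k_def by linarith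
  then have "(\<tau> - \<sigma>) * real k \<ge> 2" using h by (simp add: field_simps)
  moreover have "k \<ge> 2" by (simp add: k_def)
  ultimately have "\<forall>\<^sub>F n0 in sequentially. n0 < k * n0 \<and>
      \<sigma> * real (k * n0 - n0) < real (KCond U (seg x (n0 + 1) (k * n0)) (seg x 1 n0))"
    using KCond_seg_gt_eventually[OF assms] h by blast
  then show "\<forall>\<^sub>F n0 in sequentially. \<exists>n1>n0.
      real (KCond U (seg x (n0 + 1) n1) (seg x 1 n0)) > \<sigma> * real (n1 - n0)"
    by (rule eventually_mono) blast
next
  fix x and a b c d :: nat
  assume h: "b > 0 \<and> d > 0 \<and> 0 < real c / real d \<and> real c / real d < real a / real b
    \<and> has_rate U0 x (real a / real b)"
  define k where "k = 2 * (b * d) + 1"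
  have "(real a / real b - real c / real d) * real k \<ge> 2"
    using rat_gap_mult_ge_two h unfolding k_def by blast
  moreover have "k \<ge> 2" using h by (simp add: k_def)
  ultimately have "\<forall>\<^sub>F n0 in sequentially. n0 < k * n0 \<and> real c / real d * real (k * n0 - n0)
      < real (KCond U (seg x (n0 + 1) (k * n0)) (seg x 1 n0))"
    using KCond_seg_gt_eventually[OF assms] h by blast
  moreover have "eval r_scale [n0, a, b, c, d] (k * n0)" for n0
    using computesD[OF computes_r_scale] by (simp add: k_def)
  ultimately show "\<forall>\<^sub>F n0 in sequentially. \<exists>n1. eval r_scale [n0, a, b, c, d] n1 \<and> n1 > n0 \<and>
      real (KCond U (seg x (n0 + 1) n1) (seg x 1 n0)) > real c / real d * real (n1 - n0)"
    by (elim eventually_mono) blast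
qed

end
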